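(* Let $\mathcal T$ be a rooted binary phylogenetic $X$-tree. Then $|\mathcal C(\mathcal T)|\le (|X|+1)^{4c_{\mathcal T}-2}$.
   Context: A rooted binary phylogenetic $X$-tree is a rooted tree with leaf set $X$ in which the root has degree two and all other interior vertices have degree three. A cherry is a pair of leaves adjacent to a common vertex; $c_{\mathcal T}$ is the number of cherries of $\mathcal T$. For a leaf $a$, $\mathcal T[-a]$ is obtained by deleting $a$ and suppressing the resulting non-root degree-2 vertex (if the tree is a single vertex $a$, deleting it yields the empty tree $\emptyset$). The set $\mathcal C(\mathcal T)$ of cherry-picked trees of $\mathcal T$ is the smallest set of trees (leaf-labeled, up to isomorphism preserving labels) containing $\mathcal T$ and $\emptyset$ such that whenever $\mathcal T'\in\mathcal C(\mathcal T)$ and $\{a,b\}$ is a cherry of $\mathcal T'$, both $\mathcal T'[-a]$ and $\mathcal T'[-b]$ are in $\mathcal C(\mathcal T)$. *)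

theory Defs
  imports Main
begin

text \<open>A single leaf is the one-vertex tree;
  a Node is an interior vertex with exactly two children (so the root has degree
  two and every other interior vertex degree three). The empty tree is None.\<close>
datatype 'a btree = Leaf 'a | Node "'a btree" "'a btree"

fun leaf_list :: "'a btree \<Rightarrow> 'a list" where
  "leaf_list (Leaf a) = [a]"
| "leaf_list (Node l r) = leaf_list l @ leaf_list r"

definition phylo_tree :: "'a set \<Rightarrow> 'a btree \<Rightarrow> bool" where
  "phylo_tree X T \<longleftrightarrow> distinct (leaf_list T) \<and> set (leaf_list T) = X"

text \<open>Deleting leaf a and suppressing the resulting degree-2 vertex
  (deleting the only leaf yields the empty tree None).\<close>
fun del_leaf :: "'a \<Rightarrow> 'a btree \<Rightarrow> 'a btree option" where
  "del_leaf a (Leaf b) = (if a = b then None else Some (Leaf b))"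
| "del_leaf a (Node l r) =
     (case (del_leaf a l, del_leaf a r) of
        (None, None) \<Rightarrow> None
      | (None, Some r') \<Rightarrow> Some r'
      | (Some l', None) \<Rightarrow> Some l'
      | (Some l', Some r') \<Rightarrow> Some (Node l' r'))"

fun cherries :: "'a btree \<Rightarrow> 'a set set" where
  "cherries (Leaf a) = {}"
| "cherries (Node (Leaf a) (Leaf b)) = {{a, b}}"
| "cherries (Node l r) = cherries l \<union> cherries r"

definition num_cherries :: "'a btree \<Rightarrow> nat" where
  "num_cherries T = card (cherries T)"

inductive iso :: "'a btree \<Rightarrow> 'a btree \<Rightarrow> bool" where
  iso_leaf: "iso (Leaf a) (Leaf a)"
| iso_node: "iso l l' \<Longrightarrow> iso r r' \<Longrightarrow> iso (Node l r) (Node l' r')"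
| iso_swap: "iso l r' \<Longrightarrow> iso r l' \<Longrightarrow> iso (Node l r) (Node l' r')"

definition iso_opt_rel :: "('a btree option \<times> 'a btree option) set" where
  "iso_opt_rel = {(s, t). rel_option iso s t}"

inductive_set cherry_reach :: "'a btree \<Rightarrow> 'a btree option set" for T where
  cr_self: "Some T \<in> cherry_reach T"
| cr_empty: "None \<in> cherry_reach T"
| cr_pick: "Some t \<in> cherry_reach T \<Longrightarrow> {a, b} \<in> cherries t \<Longrightarrow> del_leaf a t \<in> cherry_reach T"

definition cherry_picked :: "'a btree \<Rightarrow> 'a btree option set set" where
  "cherry_picked T = cherry_reach T // iso_opt_rel"

end

theory Submission
  imports Defs
begin

text \<open>A tree reachable from \<open>Node l r\<close> by cherry picking is a single leaf or \<open>Node l' r'\<close> with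
  \<open>l'\<close> reachable from \<open>l\<close> and \<open>r'\<close> from \<open>r\<close>: a cherry of \<open>Node l' r'\<close> other than the pair of
  leaves \<open>l'\<close>, \<open>r'\<close> lies inside \<open>l'\<close> or \<open>r'\<close>, and picking it there leaves the other side
  untouched. Hence the number \<open>N\<close> of reachable trees satisfies \<open>N (Node l r) \<le> N l \<cdot> N r + n\<close>,
  with \<open>n\<close> the number of leaves, and \<open>C(T)\<close> has at most \<open>N T + 1\<close> elements. Induction then
  gives \<open>N t + n \<le> (n + 1)^(4c - 2)\<close> for trees with \<open>c \<ge> 1\<close> cherries: hanging a leaf at the
  root keeps \<open>c\<close> and costs a factor \<open>n + 1\<close>, while joining two non-trivial subtrees adds their
  cherry counts, leaving a factor \<open>(n + 1)^2\<close> to absorb the term \<open>n\<close>.\<close>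

lemma del_leaf_notin: "a \<notin> set (leaf_list t) \<Longrightarrow> del_leaf a t = Some t"
  by (induction t) auto

lemma del_leaf_eq_None: "del_leaf a t = None \<Longrightarrow> set (leaf_list t) \<subseteq> {a}"
  by (induction t) (auto split: option.splits if_splits)

lemma set_leaf_list_del_leaf:
  "del_leaf a t = Some t' \<Longrightarrow> set (leaf_list t') \<subseteq> set (leaf_list t)"
  by (induction t arbitrary: t') (fastforce split: option.splits if_splits)+

lemma distinct_del_leaf:
  "del_leaf a t = Some t' \<Longrightarrow> distinct (leaf_list t) \<Longrightarrow> distinct (leaf_list t')"
  by (induction t arbitrary: t') (fastforce split: option.splits if_splits dest: set_leaf_list_del_leaf)+

lemma finite_cherries: "finite (cherries t)"
  by (induction t rule: cherries.induct) auto

lemma cherries_subset_leaves: "s \<in> cherries t \<Longrightarrow> s \<subseteq> set (leaf_list t)"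
  by (induction t rule: cherries.induct) auto

lemma empty_notin_cherries: "{} \<notin> cherries t"
  by (induction t rule: cherries.induct) auto

lemma cherry_distinct: "{a, b} \<in> cherries t \<Longrightarrow> distinct (leaf_list t) \<Longrightarrow> a \<noteq> b"
  by (induction t rule: cherries.induct) (auto simp: doubleton_eq_iff)

lemma cherries_Node:
  "\<not> (\<exists>x y. l = Leaf x \<and> r = Leaf y) \<Longrightarrow> cherries (Node l r) = cherries l \<union> cherries r"
  by (cases l; cases r) auto

lemma del_leaf_cherry_Node:
  assumes "distinct (leaf_list (Node l r))" and "{a, b} \<in> cherries l"
  obtains l' where "del_leaf a l = Some l'" and "del_leaf a (Node l r) = Some (Node l' r)"
    and "del_leaf a (Node r l) = Some (Node r l')"
proof -
  have "a \<in> set (leaf_list l)" "b \<in> set (leaf_list l)" "a \<noteq> b"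
    using cherries_subset_leaves[OF assms(2)] cherry_distinct[OF assms(2)] assms(1) by auto
  moreover from this obtain l' where "del_leaf a l = Some l'"
    using del_leaf_eq_None[of a l] by (cases "del_leaf a l") auto
  moreover have "del_leaf a r = Some r"
    using calculation(1) assms(1) by (intro del_leaf_notin) auto
  ultimately show thesis using that by simp
qed

lemma cherry_reach_leaves:
  "x \<in> cherry_reach T \<Longrightarrow> distinct (leaf_list T) \<Longrightarrow>
   pred_option (\<lambda>t. distinct (leaf_list t) \<and> set (leaf_list t) \<subseteq> set (leaf_list T)) x"
proof (induction rule: cherry_reach.induct)
  case (cr_pick t a b)
  then show ?case
    by (cases "del_leaf a t") (auto dest: set_leaf_list_del_leaf distinct_del_leaf)
qed simp_all

definition picked_trees :: "'a btree \<Rightarrow> 'a btree set" where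
  "picked_trees T = {t. Some t \<in> cherry_reach T}"

lemma cherry_reach_eq: "cherry_reach T = insert None (Some ` picked_trees T)"
proof (intro equalityI subsetI)
  show "x \<in> insert None (Some ` picked_trees T)" if "x \<in> cherry_reach T" for x
    using that by (cases x rule: option.exhaust) (simp_all add: picked_trees_def)
qed (auto simp: picked_trees_def intro: cherry_reach.cr_empty)

lemma picked_trees_Leaf: "picked_trees (Leaf a) \<subseteq> {Leaf a}"
proof -
  have "x \<in> cherry_reach (Leaf a) \<Longrightarrow> x \<in> {Some (Leaf a), None}" for x
    by (induction rule: cherry_reach.induct) auto
  then show ?thesis by (auto simp: picked_trees_def)
qed

lemma cherry_reach_Node:
  assumes "distinct (leaf_list (Node l r))"
  shows "x \<in> cherry_reach (Node l r) \<Longrightarrow>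
    x \<in> insert None (Some ` ((\<lambda>(l', r'). Node l' r') ` (picked_trees l \<times> picked_trees r)
                             \<union> Leaf ` set (leaf_list (Node l r))))"
proof (induction rule: cherry_reach.induct)
  case cr_self then show ?case by (auto simp: picked_trees_def intro: cherry_reach.cr_self)
next
  case (cr_pick t a b)
  have dt: "distinct (leaf_list t)" and st: "set (leaf_list t) \<subseteq> set (leaf_list (Node l r))"
    using cherry_reach_leaves[OF cr_pick.hyps(1) assms] by auto
  from cr_pick.IH consider (leaf) y where "t = Leaf y"
    | (node) l' r' where "t = Node l' r'" "Some l' \<in> cherry_reach l" "Some r' \<in> cherry_reach r"
    by (auto simp: picked_trees_def)
  then show ?case
  proof cases
    case leaf then show ?thesis using cr_pick.hyps(2) by simp
  next
    case node
    consider (pair) x y where "l' = Leaf x" "r' = Leaf y"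
      | (left) "{a, b} \<in> cherries l'" | (right) "{a, b} \<in> cherries r'"
      using cherries_Node[of l' r'] cr_pick.hyps(2) node(1) by auto
    then show ?thesis
    proof cases
      case pair
      then show ?thesis
        using cr_pick.hyps(2) node(1) dt st by (auto simp: doubleton_eq_iff)
    next
      case left
      from dt node(1) have "distinct (leaf_list (Node l' r'))" by simp
      then obtain l'' where "del_leaf a l' = Some l''" "del_leaf a (Node l' r') = Some (Node l'' r')"
        using del_leaf_cherry_Node[OF _ left] by blast
      moreover have "del_leaf a l' \<in> cherry_reach l"
        using node(2) left by (rule cherry_reach.cr_pick)
      ultimately show ?thesis using node by (auto simp: picked_trees_def)
    next
      case right
      from dt node(1) have "distinct (leaf_list (Node r' l'))" by auto
      then obtain r'' where "del_leaf a r' = Some r''" "del_leaf a (Node l' r') = Some (Node l' r'')"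
        using del_leaf_cherry_Node[OF _ right] by blast
      moreover have "del_leaf a r' \<in> cherry_reach r"
        using node(3) right by (rule cherry_reach.cr_pick)
      ultimately show ?thesis using node by (auto simp: picked_trees_def)
    qed
  qed
qed simp

lemma picked_trees_Node_subset:
  assumes "distinct (leaf_list (Node l r))"
  shows "picked_trees (Node l r) \<subseteq>
    (\<lambda>(l', r'). Node l' r') ` (picked_trees l \<times> picked_trees r) \<union> Leaf ` set (leaf_list (Node l r))"
  using cherry_reach_Node[OF assms] by (auto simp: picked_trees_def)

fun picked_bound :: "'a btree \<Rightarrow> nat" where
  "picked_bound (Leaf a) = 1"
| "picked_bound (Node l r) = picked_bound l * picked_bound r + length (leaf_list (Node l r))"

lemma card_picked_trees_le:
  "distinct (leaf_list t) \<Longrightarrow> finite (picked_trees t) \<and> card (picked_trees t) \<le> picked_bound t"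
proof (induction t)
  case (Leaf a)
  then show ?case
    using picked_trees_Leaf[of a] card_mono[of "{Leaf a}"] finite_subset[of _ "{Leaf a}"] by auto
next
  case (Node l r)
  let ?pairs = "(\<lambda>(l', r'). Node l' r') ` (picked_trees l \<times> picked_trees r)"
  let ?leaves = "Leaf ` set (leaf_list (Node l r))"
  have fin_l: "finite (picked_trees l)" and card_l: "card (picked_trees l) \<le> picked_bound l"
    and fin_r: "finite (picked_trees r)" and card_r: "card (picked_trees r) \<le> picked_bound r"
    using Node by auto
  have fin: "finite (?pairs \<union> ?leaves)" using fin_l fin_r by simp
  have "card (?pairs \<union> ?leaves) \<le> card ?pairs + card ?leaves" by (rule card_Un_le)
  also have "card ?pairs \<le> card (picked_trees l) * card (picked_trees r)"
    using card_image_le[of "picked_trees l \<times> picked_trees r"] fin_l fin_r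
    by (simp add: card_cartesian_product)
  also have "\<dots> \<le> picked_bound l * picked_bound r" using card_l card_r by (rule mult_le_mono)
  also have "card ?leaves \<le> length (leaf_list (Node l r))"
    using card_image_le card_length le_trans by blast
  finally have "card (?pairs \<union> ?leaves) \<le> picked_bound (Node l r)" by simp
  then show ?case
    using picked_trees_Node_subset[OF Node.prems] card_mono[OF fin] finite_subset[OF _ fin]
    by (meson le_trans)
qed

fun cherry_count :: "'a btree \<Rightarrow> nat" where
  "cherry_count (Leaf a) = 0"
| "cherry_count (Node (Leaf a) (Leaf b)) = 1"
| "cherry_count (Node l r) = cherry_count l + cherry_count r"

lemma cherry_count_Node:
  "\<not> (\<exists>x y. l = Leaf x \<and> r = Leaf y) \<Longrightarrow> cherry_count (Node l r) = cherry_count l + cherry_count r"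
  by (cases l; cases r) auto

lemma cherry_count_pos: "\<nexists>a. t = Leaf a \<Longrightarrow> 1 \<le> cherry_count t"
  by (induction t rule: cherry_count.induct) auto

lemma card_cherries: "distinct (leaf_list t) \<Longrightarrow> card (cherries t) = cherry_count t"
proof (induction t)
  case (Node l r)
  show ?case
  proof (cases "\<exists>x y. l = Leaf x \<and> r = Leaf y")
    case False
    have "set (leaf_list l) \<inter> set (leaf_list r) = {}" using Node.prems by simp
    then have "cherries l \<inter> cherries r \<subseteq> {{}}" using cherries_subset_leaves by blast
    then have "cherries l \<inter> cherries r = {}" using empty_notin_cherries by blast
    then show ?thesis
      using Node False by (simp add: card_Un_disjoint finite_cherries cherries_Node cherry_count_Node)
  qed auto
qed simp

lemma power_add_le_Suc_power:
  fixes x k :: nat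
  assumes "2 \<le> k"
  shows "x ^ k + x + 1 \<le> (x + 1) ^ k"
  using assms
proof (induction k rule: dec_induct)
  case base then show ?case by (simp add: power2_eq_square)
next
  case (step k)
  have "x ^ Suc k + x + 1 \<le> (x + 1) * (x ^ k + x + 1)" by (simp add: algebra_simps)
  also have "\<dots> \<le> (x + 1) * (x + 1) ^ k" using step.IH by (rule mult_le_mono2)
  finally show ?case by simp
qed

lemma leaf_step_bound:
  fixes f m k :: nat
  assumes "f + m \<le> (m + 1) ^ k" and "2 \<le> k"
  shows "f + 2 * (m + 1) \<le> (m + 2) ^ k"
proof -
  have "f + 2 * (m + 1) \<le> (m + 1) ^ k + (m + 1) + 1" using assms(1) by simp
  also have "\<dots> \<le> (m + 2) ^ k" using power_add_le_Suc_power[OF assms(2), of "m + 1"] by simp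
  finally show ?thesis .
qed

lemma join_step_bound:
  fixes f g m n k l :: nat
  assumes "f + m \<le> (m + 1) ^ k" and "g + n \<le> (n + 1) ^ l"
  shows "f * g + 2 * (m + n) \<le> (m + n + 1) ^ (k + l + 2)"
proof -
  define P where "P = (m + n + 1) ^ k * (m + n + 1) ^ l"
  have "f \<le> (m + n + 1) ^ k"
    using assms(1) power_mono[of "m + 1" "m + n + 1" k] by simp
  moreover have "g \<le> (m + n + 1) ^ l"
    using assms(2) power_mono[of "n + 1" "m + n + 1" l] by simp
  ultimately have "f * g \<le> P" unfolding P_def by (rule mult_le_mono)
  moreover have "P + 2 * (m + n) \<le> P * (m + n + 1) ^ 2"
  proof -
    have "1 \<le> P" by (simp add: P_def)
    then have "P + 2 * (m + n) \<le> P + P * (2 * (m + n))" by simp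
    also have "\<dots> \<le> P * (m + n + 1) ^ 2" by (simp add: power2_eq_square algebra_simps)
    finally show ?thesis .
  qed
  ultimately have "f * g + 2 * (m + n) \<le> P * (m + n + 1) ^ 2" by linarith
  then show ?thesis by (simp only: P_def power_add)
qed

lemma picked_bound_le:
  "\<nexists>a. t = Leaf a \<Longrightarrow>
   picked_bound t + length (leaf_list t) \<le> (length (leaf_list t) + 1) ^ (4 * cherry_count t - 2)"
proof (induction t)
  case (Node l r)
  consider (leaves) a b where "l = Leaf a" "r = Leaf b"
    | (leaf_left) a where "l = Leaf a" "\<nexists>b. r = Leaf b"
    | (leaf_right) b where "\<nexists>a. l = Leaf a" "r = Leaf b"
    | (nodes) "\<nexists>a. l = Leaf a" "\<nexists>b. r = Leaf b"
    by blast
  then show ?case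
  proof cases
    case leaves
    then show ?thesis by (simp add: power2_eq_square)
  next
    case leaf_left
    have "2 \<le> 4 * cherry_count r - 2" using cherry_count_pos[OF leaf_left(2)] by simp
    from leaf_step_bound[OF Node.IH(2)[OF leaf_left(2)] this] show ?thesis
      using leaf_left cherry_count_Node[of l r] by simp
  next
    case leaf_right
    have "2 \<le> 4 * cherry_count l - 2" using cherry_count_pos[OF leaf_right(1)] by simp
    from leaf_step_bound[OF Node.IH(1)[OF leaf_right(1)] this] show ?thesis
      using leaf_right cherry_count_Node[of l r] by simp
  next
    case nodes
    have "4 * cherry_count (Node l r) - 2 = (4 * cherry_count l - 2) + (4 * cherry_count r - 2) + 2"
      using nodes cherry_count_Node[of l r] cherry_count_pos[of l] cherry_count_pos[of r] by auto
    then show ?thesis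
      using join_step_bound[OF Node.IH(1)[OF nodes(1)] Node.IH(2)[OF nodes(2)]] by simp
  qed
qed simp

lemma card_quotient_le:
  assumes "finite A"
  shows "card (A // r) \<le> card A"
proof -
  have "A // r = (\<lambda>x. r `` {x}) ` A" by (auto simp: quotient_def)
  then show ?thesis using card_image_le[OF assms] by simp
qed

theorem mainTheorem6:
  fixes T :: "'a btree" and X :: "'a set"
  assumes "phylo_tree X T" and "card X \<ge> 2"
  shows "card (cherry_picked T) \<le> (card X + 1) ^ (4 * num_cherries T - 2)"
proof -
  have distinct: "distinct (leaf_list T)" and "set (leaf_list T) = X"
    using assms(1) by (auto simp: phylo_tree_def)
  then have leaves: "length (leaf_list T) = card X" by (metis distinct_card)
  then have not_leaf: "\<nexists>a. T = Leaf a" using assms(2) by auto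
  from card_picked_trees_le[OF distinct]
  have fin: "finite (picked_trees T)" and card: "card (picked_trees T) \<le> picked_bound T" by auto
  have "card (cherry_picked T) \<le> card (cherry_reach T)"
    unfolding cherry_picked_def cherry_reach_eq using fin by (intro card_quotient_le) simp
  also have "\<dots> = card (picked_trees T) + 1"
    using fin by (simp add: cherry_reach_eq card_image)
  also have "\<dots> \<le> picked_bound T + card X" using card assms(2) by simp
  also have "\<dots> \<le> (card X + 1) ^ (4 * cherry_count T - 2)"
    using picked_bound_le[OF not_leaf] leaves by simp
  finally show ?thesis using card_cherries[OF distinct] by (simp add: num_cherries_def)
qed

end
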